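(* For every $n\ge 3$, under the uniform model, $$E_U(\Phi_n)=\binom{n}{2}\left(\frac{1}{2n-3}\,{}_3F_2\!\left(\begin{matrix}2,\ 2,\ 2-n\\ 1,\ 4-2n\end{matrix};2\right)-\frac12\cdot\frac{(2n-2)!!}{(2n-3)!!}\right),$$ where ${}_3F_2(\cdots;2)=\sum_{k=0}^{n-2}\frac{(2)_k(2)_k(2-n)_k}{(1)_k(4-2n)_k}\frac{2^k}{k!}$ with $(a)_k=a(a+1)\cdots(a+k-1)$. Moreover $E_U(\Phi_n)\sim\frac{\sqrt{\pi}}{4}n^{5/2}$ as $n\to\infty$.
   Context: $\mathcal{BT}_n$ is the set of (isomorphism classes of) binary phylogenetic trees with leaves bijectively labeled by $\{1,\dots,n\}$ (rooted, every internal node with exactly two children); $|\mathcal{BT}_n|=(2n-3)!!$. For $T\in\mathcal{BT}_n$, $\Phi(T)=\sum_{1\le i<j\le n}\delta_T(LCA_T(i,j))$, where $\delta_T$ is depth (number of arcs from the root) and $LCA$ is lowest common ancestor. $\Phi_n$ is $\Phi(T)$ for random $T\in\mathcal{BT}_n$. The uniform model gives every tree in $\mathcal{BT}_n$ probability $1/(2n-3)!!$; $E_U$ is expectation under it. $m!!$ denotes the double factorial. *)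

theory Defs
  imports "HOL-Analysis.Analysis" "HOL-Library.Landau_Symbols"
begin

text \<open>Ordered trees; an isomorphism class of (unordered) binary phylogenetic trees
  is represented by its unique canonical form, in which at every internal node
  the left subtree contains the smallest leaf label of the node.\<close>

datatype ltree = Leaf nat | Node ltree ltree

fun leaves :: "ltree \<Rightarrow> nat list" where
  "leaves (Leaf i) = [i]"
| "leaves (Node l r) = leaves l @ leaves r"

fun canonical :: "ltree \<Rightarrow> bool" where
  "canonical (Leaf i) = True"
| "canonical (Node l r) =
     (canonical l \<and> canonical r \<and> Min (set (leaves l)) < Min (set (leaves r)))"

definition BT :: "nat \<Rightarrow> ltree set" where
  "BT n = {t. distinct (leaves t) \<and> set (leaves t) = {1..n} \<and> canonical t}"

fun lca_depth :: "ltree \<Rightarrow> nat \<Rightarrow> nat \<Rightarrow> nat" where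
  "lca_depth (Leaf k) i j = 0"
| "lca_depth (Node l r) i j =
     (if i \<in> set (leaves l) \<and> j \<in> set (leaves l) then Suc (lca_depth l i j)
      else if i \<in> set (leaves r) \<and> j \<in> set (leaves r) then Suc (lca_depth r i j)
      else 0)"

definition Phi :: "nat \<Rightarrow> ltree \<Rightarrow> real" where
  "Phi n t = (\<Sum>i\<in>{1..n}. \<Sum>j\<in>{i<..n}. real (lca_depth t i j))"

definition E_U_Phi :: "nat \<Rightarrow> real" where
  "E_U_Phi n = (\<Sum>t\<in>BT n. Phi n t) / real (card (BT n))"

fun dfact :: "nat \<Rightarrow> nat" where
  "dfact 0 = 1"
| "dfact (Suc 0) = 1"
| "dfact (Suc (Suc m)) = Suc (Suc m) * dfact m"

definition hyp3F2 :: "nat \<Rightarrow> real" where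
  "hyp3F2 n = (\<Sum>k=0..n-2.
      (pochhammer 2 k * pochhammer 2 k * pochhammer (2 - real n) k)
      / (pochhammer 1 k * pochhammer (4 - 2 * real n) k) * 2 ^ k / fact k)"

end

theory Submission
  imports Defs "HOL-Real_Asymp.Real_Asymp"
begin

(* Trees on {1..n+1} are exactly the trees on {1..n} with the leaf n+1 grafted
   onto one of their 2n-1 arcs (the arc above the root included), each tree
   arising once.  Summing the recursive forms of the cophenetic and Sackin
   indices over all graftings gives linear recurrences for their totals over
   BT n, which are solved by double factorials; this yields the closed form
   E_U(Phi_n) = C(n,2) ((2n-2)!! / (2 (2n-3)!!) - 1).

   The terminating 3F2 is rewritten as a sum sum_k (k+1)^2 2^k C(2m-k,m) with
   n = m + 2; splitting (k+1)^2 = (k+1)(k+2) - (k+1), both pieces are evaluated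
   in closed form by creative telescoping (explicit Zeilberger certificates).
   Expressing double factorials through the central binomial coefficient
   relates both sides and gives the first claim.  The asymptotics follow from
   C(2m,m) sqrt m / 4^m --> 1/sqrt pi, obtained from the asymptotics of the
   generalised binomial coefficient (-1/2 gchoose m). *)

abbreviation nleaves :: "ltree \<Rightarrow> nat" where
  "nleaves t \<equiv> length (leaves t)"

text \<open>For a tree whose leaf labels are distinct, the total cophenetic index
  \<open>\<Sum>\<^sub>i\<^sub><\<^sub>j depth(lca(i,j))\<close> satisfies the recursion below: every pair of
  leaves lying in the same root subtree gains one unit of depth.\<close>
fun cophenetic :: "ltree \<Rightarrow> real" where
  "cophenetic (Leaf i) = 0"
| "cophenetic (Node l r) = cophenetic l + cophenetic r
     + real (nleaves l) * (real (nleaves l) - 1) / 2 + real (nleaves r) * (real (nleaves r) - 1) / 2"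

text \<open>The Sackin index (sum of the depths of all leaves); it enters the
  recursion for the expected cophenetic index.\<close>
fun sackin :: "ltree \<Rightarrow> real" where
  "sackin (Leaf i) = 0"
| "sackin (Node l r) = sackin l + sackin r + real (nleaves l) + real (nleaves r)"

fun graft :: "nat \<Rightarrow> ltree \<Rightarrow> ltree set" where
  "graft x (Leaf i) = {Node (Leaf i) (Leaf x)}"
| "graft x (Node l r) = insert (Node (Node l r) (Leaf x))
      ((\<lambda>l'. Node l' r) ` graft x l \<union> (\<lambda>r'. Node l r') ` graft x r)"

fun prune :: "nat \<Rightarrow> ltree \<Rightarrow> ltree" where
  "prune x (Leaf i) = Leaf i"
| "prune x (Node l r) =
     (if r = Leaf x then l
      else if x \<in> set (leaves l) then Node (prune x l) r
      else Node l (prune x r))"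

lemma nleaves_pos: "nleaves t \<ge> 1"
  by (induction t) auto

lemma nleaves_ge_2_iff: "nleaves t \<ge> 2 \<longleftrightarrow> (\<forall>i. t \<noteq> Leaf i)"
proof (cases t)
  case (Node l r)
  then show ?thesis using nleaves_pos[of l] nleaves_pos[of r] by simp
qed simp

lemma leaves_nonempty: "set (leaves t) \<noteq> {}"
  using nleaves_pos[of t] by auto

lemma finite_graft: "finite (graft x t)"
  by (induction t) auto

lemma graft_leaves:
  "t' \<in> graft x t \<Longrightarrow> set (leaves t') = insert x (set (leaves t)) \<and> nleaves t' = Suc (nleaves t)"
  by (induction t arbitrary: t') auto

lemma graft_NodeE:
  assumes "t' \<in> graft x (Node l r)"
  obtains (root) "t' = Node (Node l r) (Leaf x)"
    | (left) l' where "l' \<in> graft x l" "t' = Node l' r"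
    | (right) r' where "r' \<in> graft x r" "t' = Node l r'"
  using assms by auto

lemma graft_distinct:
  "t' \<in> graft x t \<Longrightarrow> distinct (leaves t) \<Longrightarrow> x \<notin> set (leaves t) \<Longrightarrow> distinct (leaves t')"
  by (induction t arbitrary: t') (use graft_leaves in fastforce)+

text \<open>Grafting a label larger than all existing ones keeps the canonical form,
  since the minimum of every subtree is unchanged.\<close>
lemma graft_canonical:
  assumes "t' \<in> graft x t" "canonical t" "\<forall>y\<in>set (leaves t). y < x"
  shows "canonical t'"
  using assms
proof (induction t arbitrary: t')
  case (Leaf i) then show ?case by auto
next
  case (Node l r)
  have keep_Min: "Min (insert x (set (leaves s))) = Min (set (leaves s))"
    if "\<forall>y\<in>set (leaves s). y < x" for s
  proof -
    have "Min (set (leaves s)) < x" using that Min_in leaves_nonempty by blast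
    then show ?thesis using Min_insert[OF _ leaves_nonempty, of s x] by simp
  qed
  from Node.prems(1) show ?case
  proof (cases rule: graft_NodeE)
    case root
    have "Min (set (leaves (Node l r))) \<in> set (leaves (Node l r))"
      using Min_in leaves_nonempty by blast
    then show ?thesis using root Node.prems(2,3) by auto
  next
    case (left l')
    then show ?thesis using Node graft_leaves[OF left(1)] keep_Min[of l] by auto
  next
    case (right r')
    then show ?thesis using Node graft_leaves[OF right(1)] keep_Min[of r] by auto
  qed
qed

text \<open>Pruning undoes grafting; in particular graft sets of different trees are
  disjoint.\<close>
lemma prune_graft: "t' \<in> graft x t \<Longrightarrow> x \<notin> set (leaves t) \<Longrightarrow> prune x t' = t"
proof (induction t arbitrary: t')
  case (Leaf i) then show ?case by auto
next
  case (Node l r)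
  from Node.prems(1) show ?case
  proof (cases rule: graft_NodeE)
    case root then show ?thesis by auto
  next
    case (left l') then show ?thesis using Node graft_leaves[OF left(1)] by auto
  next
    case (right r')
    then have "r' \<noteq> Leaf x" using graft_leaves[OF right(1)] nleaves_pos[of r] by auto
    then show ?thesis using right Node by auto
  qed
qed

lemma Min_leaves_less:
  assumes "distinct (leaves t)" "nleaves t \<ge> 2" "\<forall>y\<in>set (leaves t). y \<le> (x::nat)"
  shows "Min (set (leaves t)) < x"
proof -
  have "card (set (leaves t)) \<ge> 2" using assms(1,2) distinct_card by metis
  have "\<exists>y\<in>set (leaves t). y \<noteq> x"
  proof (rule ccontr)
    assume "\<not> (\<exists>y\<in>set (leaves t). y \<noteq> x)"
    then have "set (leaves t) \<subseteq> {x}" by auto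
    then have "card (set (leaves t)) \<le> 1" using card_mono[of "{x}"] by fastforce
    then show False using \<open>card (set (leaves t)) \<ge> 2\<close> by simp
  qed
  then obtain y where y: "y \<in> set (leaves t)" "y \<noteq> x" by blast
  then have "y < x" using assms(3) by fastforce
  moreover have "Min (set (leaves t)) \<le> y" using y(1) by simp
  ultimately show ?thesis by simp
qed

lemma Min_leaves_remove_max:
  assumes "distinct (leaves t)" "nleaves t \<ge> 2" "\<forall>y\<in>set (leaves t). y \<le> x"
  shows "Min (set (leaves t) - {x}) = Min (set (leaves t))"
proof (rule Min_eqI)
  have "Min (set (leaves t)) < x" using Min_leaves_less assms by blast
  then show "Min (set (leaves t)) \<in> set (leaves t) - {x}" using Min_in leaves_nonempty by auto
qed auto

text \<open>In a canonical tree, the maximal label \<open>x\<close> is never a single leaf forming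
  the left subtree; so unless it is the right child of the root, the root subtree
  containing it has at least two leaves and pruning recurses into it.\<close>
lemma max_leaf_subtree:
  assumes "canonical (Node l r)" "\<forall>y\<in>set (leaves r). y \<le> x" "r \<noteq> Leaf x"
  shows "x \<in> set (leaves l) \<Longrightarrow> nleaves l \<ge> 2" and "x \<in> set (leaves r) \<Longrightarrow> nleaves r \<ge> 2"
proof -
  assume x: "x \<in> set (leaves l)"
  have "Min (set (leaves r)) \<le> x" using assms(2) Min_in[OF _ leaves_nonempty[of r]] by auto
  then show "nleaves l \<ge> 2" unfolding nleaves_ge_2_iff using x assms(1) by fastforce
next
  assume "x \<in> set (leaves r)"
  then show "nleaves r \<ge> 2" unfolding nleaves_ge_2_iff using assms(3) by auto
qed

lemma Node_Leaf_in_graft: "Node t (Leaf x) \<in> graft x t"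
  by (cases t) auto

lemma prune_max_leaf:
  assumes "distinct (leaves t)" "canonical t" "x \<in> set (leaves t)"
    "\<forall>y\<in>set (leaves t). y \<le> x" "nleaves t \<ge> 2"
  shows "t \<in> graft x (prune x t) \<and> set (leaves (prune x t)) = set (leaves t) - {x}
     \<and> distinct (leaves (prune x t)) \<and> canonical (prune x t)"
  using assms
proof (induction t)
  case (Leaf i) then show ?case by simp
next
  case (Node l r)
  have dist: "distinct (leaves l)" "distinct (leaves r)" "set (leaves l) \<inter> set (leaves r) = {}"
    and canon: "canonical l" "canonical r" "Min (set (leaves l)) < Min (set (leaves r))"
    and bound: "\<forall>y\<in>set (leaves l). y \<le> x" "\<forall>y\<in>set (leaves r). y \<le> x"
    using Node.prems(1,2,4) by auto
  consider (root) "r = Leaf x" | (left) "r \<noteq> Leaf x" "x \<in> set (leaves l)"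
    | (right) "r \<noteq> Leaf x" "x \<in> set (leaves r)"
    using Node.prems(3) by auto
  then show ?case
  proof cases
    case root
    then show ?thesis using dist canon Node_Leaf_in_graft[of l x] by auto
  next
    case left
    then have two: "nleaves l \<ge> 2" using max_leaf_subtree(1) Node.prems(2) bound(2) by blast
    then have IH: "l \<in> graft x (prune x l) \<and> set (leaves (prune x l)) = set (leaves l) - {x}
        \<and> distinct (leaves (prune x l)) \<and> canonical (prune x l)"
      using Node.IH(1) dist canon left bound by simp
    moreover have "Min (set (leaves (prune x l))) = Min (set (leaves l))"
      using IH Min_leaves_remove_max[OF dist(1) two bound(1)] by simp
    ultimately show ?thesis using left dist canon by auto
  next
    case right
    then have two: "nleaves r \<ge> 2" using max_leaf_subtree(2) Node.prems(2) bound(2) by blast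
    then have IH: "r \<in> graft x (prune x r) \<and> set (leaves (prune x r)) = set (leaves r) - {x}
        \<and> distinct (leaves (prune x r)) \<and> canonical (prune x r)"
      using Node.IH(2) dist canon right bound by simp
    moreover have "Min (set (leaves (prune x r))) = Min (set (leaves r))"
      using IH Min_leaves_remove_max[OF dist(2) two bound(2)] by simp
    moreover have "x \<notin> set (leaves l)" using right dist(3) by auto
    ultimately show ?thesis using right dist canon by auto
  qed
qed

lemma BT_nleaves: "t \<in> BT n \<Longrightarrow> nleaves t = n"
  unfolding BT_def using distinct_card by fastforce

lemma BT_1: "BT 1 = {Leaf 1}"
proof
  show "BT 1 \<subseteq> {Leaf 1}"
  proof
    fix t assume t: "t \<in> BT 1"
    then have "\<not> nleaves t \<ge> 2" using BT_nleaves by simp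
    then obtain i where "t = Leaf i" using nleaves_ge_2_iff by blast
    then show "t \<in> {Leaf 1}" using t by (simp add: BT_def)
  qed
qed (simp add: BT_def)

lemma BT_Suc: assumes "n \<ge> 1" shows "BT (Suc n) = (\<Union>t\<in>BT n. graft (Suc n) t)"
proof
  show "(\<Union>t\<in>BT n. graft (Suc n) t) \<subseteq> BT (Suc n)"
  proof
    fix t' assume "t' \<in> (\<Union>t\<in>BT n. graft (Suc n) t)"
    then obtain t where t: "t \<in> BT n" "t' \<in> graft (Suc n) t" by blast
    then have "set (leaves t) = {1..n}" "distinct (leaves t)" "canonical t"
      by (auto simp: BT_def)
    then show "t' \<in> BT (Suc n)"
      using graft_leaves[OF t(2)] graft_distinct[OF t(2)] graft_canonical[OF t(2)]
      by (auto simp: BT_def)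
  qed
  show "BT (Suc n) \<subseteq> (\<Union>t\<in>BT n. graft (Suc n) t)"
  proof
    fix t' assume t': "t' \<in> BT (Suc n)"
    then have "set (leaves t') = {1..Suc n}" "distinct (leaves t')" "canonical t'"
      "nleaves t' \<ge> 2"
      using BT_nleaves assms by (auto simp: BT_def)
    then have "prune (Suc n) t' \<in> BT n \<and> t' \<in> graft (Suc n) (prune (Suc n) t')"
      using prune_max_leaf[of t' "Suc n"] by (auto simp: BT_def)
    then show "t' \<in> (\<Union>t\<in>BT n. graft (Suc n) t)" by blast
  qed
qed

lemma finite_BT: "finite (BT n)"
proof (induction n)
  case 0
  have "BT 0 = {}" using leaves_nonempty by (auto simp: BT_def)
  then show ?case by simp
next
  case (Suc n)
  then show ?case using BT_1 BT_Suc[of n] finite_graft by (cases "n = 0") auto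
qed

lemma sum_BT_Suc:
  assumes "n \<ge> 1"
  shows "(\<Sum>t\<in>BT (Suc n). f t) = (\<Sum>t\<in>BT n. \<Sum>t'\<in>graft (Suc n) t. f t')"
proof -
  have "graft (Suc n) t \<inter> graft (Suc n) u = {}" if "t \<in> BT n" "u \<in> BT n" "t \<noteq> u" for t u
  proof -
    have "Suc n \<notin> set (leaves t)" "Suc n \<notin> set (leaves u)" using that by (auto simp: BT_def)
    then show ?thesis using prune_graft that(3) by blast
  qed
  then show ?thesis unfolding BT_Suc[OF assms]
    by (intro sum.UNION_disjoint finite_BT) (auto simp: finite_graft)
qed

lemma sum_graft_Node:
  assumes "x \<notin> set (leaves (Node l r))"
  shows "(\<Sum>t'\<in>graft x (Node l r). f t') = f (Node (Node l r) (Leaf x))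
     + (\<Sum>l'\<in>graft x l. f (Node l' r)) + (\<Sum>r'\<in>graft x r. f (Node l r'))"
proof -
  have root_new: "Node (Node l r) (Leaf x) \<notin> (\<lambda>l'. Node l' r) ` graft x l \<union> (\<lambda>r'. Node l r') ` graft x r"
    using assms by auto
  have disjoint: "(\<lambda>l'. Node l' r) ` graft x l \<inter> (\<lambda>r'. Node l r') ` graft x r = {}"
  proof (rule ccontr)
    assume "\<not> ?thesis"
    then obtain l' where "l' \<in> graft x l" "Node l' r \<in> (\<lambda>r'. Node l r') ` graft x r" by blast
    then have "l' = l" "x \<in> set (leaves l')" using graft_leaves by auto
    then show False using assms by simp
  qed
  have "(\<Sum>t'\<in>graft x (Node l r). f t') = f (Node (Node l r) (Leaf x))
     + ((\<Sum>t'\<in>(\<lambda>l'. Node l' r) ` graft x l. f t') + (\<Sum>t'\<in>(\<lambda>r'. Node l r') ` graft x r. f t'))"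
    using root_new disjoint by (simp add: finite_graft sum.union_disjoint)
  also have "\<dots> = f (Node (Node l r) (Leaf x))
     + ((\<Sum>l'\<in>graft x l. f (Node l' r)) + (\<Sum>r'\<in>graft x r. f (Node l r')))"
    by (simp add: sum.reindex inj_on_def)
  finally show ?thesis by (simp add: add.assoc)
qed

lemma card_graft: "x \<notin> set (leaves t) \<Longrightarrow> real (card (graft x t)) = 2 * real (nleaves t) - 1"
proof (induction t)
  case (Node l r)
  then show ?case
    using sum_graft_Node[OF Node.prems, of "\<lambda>_. 1::real"] by simp
qed simp

lemma sum_shift_const:
  assumes "\<And>y. y \<in> A \<Longrightarrow> g y = f y + c"
  shows "(\<Sum>y\<in>A. g y) = (\<Sum>y\<in>A. f y) + real (card A) * (c :: real)"
  using assms by (simp add: sum.distrib)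

lemma sum_graft_sackin: "x \<notin> set (leaves t) \<Longrightarrow>
  (\<Sum>t'\<in>graft x t. sackin t') = (2 * real (nleaves t) + 2) * sackin t + real (nleaves t) + 1"
proof (induction t)
  case (Node l r)
  have xl: "x \<notin> set (leaves l)" and xr: "x \<notin> set (leaves r)" using Node.prems by auto
  define a where "a = real (nleaves l)"
  define b where "b = real (nleaves r)"
  have left: "(\<Sum>l'\<in>graft x l. sackin (Node l' r))
      = (\<Sum>l'\<in>graft x l. sackin l') + real (card (graft x l)) * (sackin r + a + 1 + b)"
    by (rule sum_shift_const) (auto simp: a_def b_def dest: graft_leaves)
  have right: "(\<Sum>r'\<in>graft x r. sackin (Node l r'))
      = (\<Sum>r'\<in>graft x r. sackin r') + real (card (graft x r)) * (sackin l + a + b + 1)"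
    by (rule sum_shift_const) (auto simp: a_def b_def dest: graft_leaves)
  show ?case
    unfolding sum_graft_Node[OF Node.prems] left right Node.IH(1)[OF xl] Node.IH(2)[OF xr]
      card_graft[OF xl] card_graft[OF xr]
    by (simp add: a_def[symmetric] b_def[symmetric] algebra_simps)
qed simp

text \<open>Summing the cophenetic index over all graftings: the new leaf lies
  below every ancestor of its position, which produces the Sackin term.\<close>
lemma sum_graft_cophenetic: "x \<notin> set (leaves t) \<Longrightarrow>
  (\<Sum>t'\<in>graft x t. cophenetic t')
    = (2 * real (nleaves t) + 4) * cophenetic t + real (nleaves t) * (real (nleaves t) - 1) / 2 + sackin t"
proof (induction t)
  case (Node l r)
  have xl: "x \<notin> set (leaves l)" and xr: "x \<notin> set (leaves r)" using Node.prems by auto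
  define a where "a = real (nleaves l)"
  define b where "b = real (nleaves r)"
  have left: "(\<Sum>l'\<in>graft x l. cophenetic (Node l' r)) = (\<Sum>l'\<in>graft x l. cophenetic l')
      + real (card (graft x l)) * (cophenetic r + (a + 1) * a / 2 + b * (b - 1) / 2)"
    by (rule sum_shift_const) (auto simp: a_def b_def dest: graft_leaves)
  have right: "(\<Sum>r'\<in>graft x r. cophenetic (Node l r')) = (\<Sum>r'\<in>graft x r. cophenetic r')
      + real (card (graft x r)) * (cophenetic l + a * (a - 1) / 2 + (b + 1) * b / 2)"
    by (rule sum_shift_const) (auto simp: a_def b_def dest: graft_leaves)
  show ?case
    unfolding sum_graft_Node[OF Node.prems] left right Node.IH(1)[OF xl] Node.IH(2)[OF xr]
      card_graft[OF xl] card_graft[OF xr]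
    by (simp add: a_def[symmetric] b_def[symmetric] field_simps)
qed simp

definition increasing_pairs :: "nat set \<Rightarrow> (nat \<times> nat) set" where
  "increasing_pairs A = {(i, j). i \<in> A \<and> j \<in> A \<and> i < j}"

lemma finite_increasing_pairs: "finite A \<Longrightarrow> finite (increasing_pairs A)"
  by (rule finite_subset[of _ "A \<times> A"]) (auto simp: increasing_pairs_def)

text \<open>A finite set with \<open>k\<close> elements has \<open>k(k-1)/2\<close> increasing pairs: \<open>A \<times> A\<close>
  splits into the increasing pairs, their mirror images and the diagonal.\<close>
lemma card_increasing_pairs:
  assumes "finite A"
  shows "real (card (increasing_pairs A)) = real (card A) * (real (card A) - 1) / 2"
proof -
  let ?P = "increasing_pairs A" and ?swap = "\<lambda>(i, j). (j, i)" and ?diag = "\<lambda>i. (i, i)"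
  have finP: "finite ?P" using assms by (rule finite_increasing_pairs)
  have AA: "A \<times> A = (?P \<union> ?swap ` ?P) \<union> ?diag ` A"
    by (auto simp: increasing_pairs_def image_iff)
  have "card (A \<times> A) = card (?P \<union> ?swap ` ?P) + card (?diag ` A)"
    unfolding AA using assms finP by (intro card_Un_disjoint) (auto simp: increasing_pairs_def)
  also have "card (?P \<union> ?swap ` ?P) = card ?P + card (?swap ` ?P)"
    using finP by (intro card_Un_disjoint) (auto simp: increasing_pairs_def)
  also have "card (?swap ` ?P) = card ?P"
    by (rule card_image) (auto simp: inj_on_def)
  also have "card (?diag ` A) = card A"
    by (rule card_image) (auto simp: inj_on_def)
  finally have "card A * card A = 2 * card ?P + card A" by (simp add: card_cartesian_product)
  then have "real (card A) * real (card A) = 2 * real (card ?P) + real (card A)"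
    by (metis of_nat_add of_nat_mult of_nat_numeral)
  then show ?thesis by (simp add: field_simps)
qed

lemma sum_increasing_pairs_Un:
  fixes f :: "nat \<times> nat \<Rightarrow> real"
  assumes "finite A" "finite B" "A \<inter> B = {}"
    and mixed: "\<And>i j. i \<in> A \<and> j \<in> B \<or> i \<in> B \<and> j \<in> A \<Longrightarrow> f (i, j) = 0"
  shows "sum f (increasing_pairs (A \<union> B)) = sum f (increasing_pairs A) + sum f (increasing_pairs B)"
proof -
  let ?P = "increasing_pairs (A \<union> B)"
  have fin: "finite ?P" using assms(1,2) by (simp add: finite_increasing_pairs)
  have "sum f ?P = sum f (?P - increasing_pairs A) + sum f (increasing_pairs A)"
    using fin by (intro sum.subset_diff) (auto simp: increasing_pairs_def)
  also have "sum f (?P - increasing_pairs A)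
      = sum f (?P - increasing_pairs A - increasing_pairs B) + sum f (increasing_pairs B)"
    using fin assms(3) by (intro sum.subset_diff) (auto simp: increasing_pairs_def)
  also have "sum f (?P - increasing_pairs A - increasing_pairs B) = 0"
    using mixed by (intro sum.neutral) (auto simp: increasing_pairs_def)
  finally show ?thesis by simp
qed

text \<open>The recursive \<open>cophenetic\<close> really is the sum of the LCA depths
  over all pairs of leaves: pairs inside a root subtree have their LCA one
  level deeper than in that subtree, mixed pairs have the root as LCA.\<close>
lemma sum_lca_depth:
  assumes "distinct (leaves t)"
  shows "(\<Sum>(i, j)\<in>increasing_pairs (set (leaves t)). real (lca_depth t i j)) = cophenetic t"
  using assms
proof (induction t)
  case (Leaf k)
  have "increasing_pairs {k} = {}" by (auto simp: increasing_pairs_def)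
  then show ?case by simp
next
  case (Node l r)
  define A where "A = set (leaves l)"
  define B where "B = set (leaves r)"
  have dist: "distinct (leaves l)" "distinct (leaves r)" and AB: "A \<inter> B = {}"
    using Node.prems by (auto simp: A_def B_def)
  let ?f = "\<lambda>(i, j). real (lca_depth (Node l r) i j)"
  have "sum ?f (increasing_pairs (A \<union> B)) = sum ?f (increasing_pairs A) + sum ?f (increasing_pairs B)"
    using AB by (intro sum_increasing_pairs_Un) (auto simp: A_def B_def)
  also have "sum ?f (increasing_pairs A) = (\<Sum>(i, j)\<in>increasing_pairs A. real (lca_depth l i j) + 1)"
    by (rule sum.cong) (auto simp: increasing_pairs_def A_def)
  also have "\<dots> = cophenetic l + real (card (increasing_pairs A))"
    using Node.IH(1)[OF dist(1)] by (simp add: sum.distrib split_def A_def)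
  also have "sum ?f (increasing_pairs B) = (\<Sum>(i, j)\<in>increasing_pairs B. real (lca_depth r i j) + 1)"
    using AB by (intro sum.cong) (auto simp: increasing_pairs_def A_def B_def)
  also have "\<dots> = cophenetic r + real (card (increasing_pairs B))"
    using Node.IH(2)[OF dist(2)] by (simp add: sum.distrib split_def B_def)
  finally have "sum ?f (increasing_pairs (A \<union> B))
      = cophenetic l + real (card (increasing_pairs A)) + (cophenetic r + real (card (increasing_pairs B)))" .
  moreover have "card A = nleaves l" "card B = nleaves r"
    using dist distinct_card by (auto simp: A_def B_def)
  ultimately show ?case
    using card_increasing_pairs[of A] card_increasing_pairs[of B] by (simp add: A_def B_def)
qed

lemma Phi_eq_cophenetic: assumes "t \<in> BT n" shows "Phi n t = cophenetic t"
proof -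
  have L: "set (leaves t) = {1..n}" "distinct (leaves t)" using assms by (auto simp: BT_def)
  have "Phi n t = (\<Sum>(i, j)\<in>Sigma {1..n} (\<lambda>i. {i<..n}). real (lca_depth t i j))"
    unfolding Phi_def by (subst sum.Sigma) auto
  also have "Sigma {1..n} (\<lambda>i. {i<..n}) = increasing_pairs (set (leaves t))"
    using L(1) by (auto simp: increasing_pairs_def)
  finally show ?thesis using sum_lca_depth[OF L(2)] by simp
qed

lemma dfact_pos: "dfact n > 0"
  by (induction n rule: dfact.induct) auto

lemma dfact_even_step: "n \<ge> 1 \<Longrightarrow> real (dfact (2 * n)) = 2 * real n * real (dfact (2 * n - 2))"
  by (cases n) (auto simp: algebra_simps)

lemma dfact_odd_step: "n \<ge> 1 \<Longrightarrow> real (dfact (2 * n - 1)) = (2 * real n - 1) * real (dfact (2 * n - 3))"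
proof (cases "n = 1")
  case False
  assume "n \<ge> 1"
  then obtain k where k: "n = Suc (Suc k)" using False by (cases n; cases "n - 1") auto
  have "2 * n - 1 = Suc (Suc (2 * k + 1))" "2 * n - 3 = 2 * k + 1" using k by auto
  then show ?thesis using k by (simp add: algebra_simps)
qed simp

lemma BT_notin: "t \<in> BT n \<Longrightarrow> Suc n \<notin> set (leaves t)"
  by (auto simp: BT_def)

lemma card_BT: "n \<ge> 1 \<Longrightarrow> real (card (BT n)) = real (dfact (2 * n - 3))"
proof (induction n rule: nat_induct_at_least)
  case (Suc n)
  have "real (card (BT (Suc n))) = (\<Sum>t\<in>BT n. real (card (graft (Suc n) t)))"
    using sum_BT_Suc[OF Suc.hyps, of "\<lambda>_. 1::real"] by simp
  also have "\<dots> = (\<Sum>t\<in>BT n. 2 * real n - 1)"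
    by (rule sum.cong) (auto simp: card_graft BT_notin BT_nleaves)
  also have "\<dots> = real (dfact (2 * Suc n - 3))"
    using Suc.IH dfact_odd_step[OF Suc.hyps] by (simp add: numeral_3_eq_3)
  finally show ?case .
qed (use BT_1 in simp)

lemma sum_sackin_BT: "n \<ge> 1 \<Longrightarrow>
  (\<Sum>t\<in>BT n. sackin t) = real n * (real (dfact (2 * n - 2)) - real (dfact (2 * n - 3)))"
proof (induction n rule: nat_induct_at_least)
  case (Suc n)
  have idx: "2 * Suc n - 2 = 2 * n" "2 * Suc n - 3 = 2 * n - 1" by auto
  have "(\<Sum>t\<in>BT (Suc n). sackin t) = (\<Sum>t\<in>BT n. (2 * real n + 2) * sackin t + (real n + 1))"
    unfolding sum_BT_Suc[OF Suc.hyps]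
    by (rule sum.cong) (auto simp: sum_graft_sackin BT_notin BT_nleaves)
  also have "\<dots> = (2 * real n + 2) * (\<Sum>t\<in>BT n. sackin t) + (real n + 1) * real (card (BT n))"
    by (simp add: sum.distrib sum_distrib_left)
  finally show ?case
    unfolding idx dfact_even_step[OF Suc.hyps] dfact_odd_step[OF Suc.hyps] Suc.IH card_BT[OF Suc.hyps]
    by (simp add: algebra_simps)
qed (use BT_1 in simp)

lemma sum_cophenetic_BT: "n \<ge> 1 \<Longrightarrow> (\<Sum>t\<in>BT n. cophenetic t) =
   real n * (real n - 1) / 2 * (real (dfact (2 * n - 2)) / 2 - real (dfact (2 * n - 3)))"
proof (induction n rule: nat_induct_at_least)
  case (Suc n)
  have idx: "2 * Suc n - 2 = 2 * n" "2 * Suc n - 3 = 2 * n - 1" by auto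
  have "(\<Sum>t\<in>BT (Suc n). cophenetic t)
      = (\<Sum>t\<in>BT n. (2 * real n + 4) * cophenetic t + real n * (real n - 1) / 2 + sackin t)"
    unfolding sum_BT_Suc[OF Suc.hyps]
    by (rule sum.cong) (auto simp: sum_graft_cophenetic BT_notin BT_nleaves)
  also have "\<dots> = (2 * real n + 4) * (\<Sum>t\<in>BT n. cophenetic t)
      + real n * (real n - 1) / 2 * real (card (BT n)) + (\<Sum>t\<in>BT n. sackin t)"
    by (simp add: sum.distrib sum_distrib_left)
  finally show ?case
    unfolding idx dfact_even_step[OF Suc.hyps] dfact_odd_step[OF Suc.hyps] Suc.IH card_BT[OF Suc.hyps]
      sum_sackin_BT[OF Suc.hyps]
    by (simp add: field_simps)
qed (use BT_1 in simp)

lemma E_U_Phi_closed: "n \<ge> 1 \<Longrightarrow> E_U_Phi n =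
   real n * (real n - 1) / 2 * (real (dfact (2 * n - 2)) / (2 * real (dfact (2 * n - 3))) - 1)"
proof -
  assume n: "n \<ge> 1"
  have "(\<Sum>t\<in>BT n. Phi n t) = (\<Sum>t\<in>BT n. cophenetic t)"
    by (rule sum.cong) (auto simp: Phi_eq_cophenetic)
  then have "E_U_Phi n = (\<Sum>t\<in>BT n. cophenetic t) / real (card (BT n))"
    by (simp add: E_U_Phi_def)
  also have "\<dots> = real n * (real n - 1) / 2 * (real (dfact (2 * n - 2)) / 2 - real (dfact (2 * n - 3)))
      / real (dfact (2 * n - 3))"
    by (simp only: sum_cophenetic_BT[OF n] card_BT[OF n])
  finally show ?thesis
    using dfact_pos[of "2 * n - 3"] by (simp add: field_simps)
qed

text \<open>The sums \<open>\<Sum>\<^sub>k\<^sub>\<le>\<^sub>m p(k) 2\<^sup>k C(2m - k, m)\<close>, to which the terminating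
  \<open>\<^sub>3F\<^sub>2\<close> reduces.\<close>
definition binsum :: "(nat \<Rightarrow> real) \<Rightarrow> nat \<Rightarrow> real" where
  "binsum p m = (\<Sum>k<Suc m. p k * 2 ^ k * real ((2 * m - k) choose m))"

lemma telescoping_recurrence:
  fixes c c' h :: "nat \<Rightarrow> real"
  assumes cert: "\<And>k. k \<le> Suc m \<Longrightarrow> \<alpha> * c' k - \<beta> * c k = h k - h (Suc k)"
    and ends: "h 0 = 0" "h (Suc (Suc m)) = 0" "c (Suc m) = 0"
  shows "\<alpha> * (\<Sum>k<Suc (Suc m). c' k) = \<beta> * (\<Sum>k<Suc m. c k)"
proof -
  have "\<alpha> * (\<Sum>k<Suc (Suc m). c' k) - \<beta> * (\<Sum>k<Suc (Suc m). c k)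
      = (\<Sum>k<Suc (Suc m). \<alpha> * c' k - \<beta> * c k)"
    by (simp only: sum_subtractf sum_distrib_left)
  also have "\<dots> = (\<Sum>k<Suc (Suc m). h k - h (Suc k))"
    using cert by (intro sum.cong) auto
  also have "\<dots> = 0"
    using ends by (simp only: sum_lessThan_telescope')
  finally show ?thesis using ends(3) by simp
qed

lemma choose_shifts:
  assumes "k \<le> m"
  shows "real ((2 * m + 1 - k) choose m) = (2 * real m + 1 - real k) / (real m + 1 - real k) * real ((2 * m - k) choose m)"
    and "real ((2 * Suc m - k) choose Suc m) = (2 * real m + 2 - real k) / (real m + 1) * real ((2 * m + 1 - k) choose m)"
proof -
  have idx: "2 * m + 1 - k - m = m + 1 - k" "2 * m + 1 - k - 1 = 2 * m - k" "2 * Suc m - k = Suc (2 * m + 1 - k)"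
    using assms by auto
  have casts: "real (m + 1 - k) = real m + 1 - real k" "real (2 * m + 1 - k) = 2 * real m + 1 - real k"
    using assms by simp_all
  have "(m + 1 - k) * ((2 * m + 1 - k) choose m) = (2 * m + 1 - k) * ((2 * m - k) choose m)"
    using binomial_absorb_comp[of "2 * m + 1 - k" m] unfolding idx .
  then have "(real m + 1 - real k) * real ((2 * m + 1 - k) choose m)
      = (2 * real m + 1 - real k) * real ((2 * m - k) choose m)"
    unfolding casts[symmetric] by (metis of_nat_mult)
  moreover have "real m + 1 - real k > 0" using assms by simp
  ultimately show "real ((2 * m + 1 - k) choose m)
      = (2 * real m + 1 - real k) / (real m + 1 - real k) * real ((2 * m - k) choose m)"
    by (simp add: field_simps)
  have "Suc m * ((2 * Suc m - k) choose Suc m) = Suc (2 * m + 1 - k) * ((2 * m + 1 - k) choose m)"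
    unfolding idx by (rule Suc_times_binomial)
  then have "real (Suc m) * real ((2 * Suc m - k) choose Suc m)
      = real (Suc (2 * m + 1 - k)) * real ((2 * m + 1 - k) choose m)"
    by (metis of_nat_mult)
  then show "real ((2 * Suc m - k) choose Suc m)
      = (2 * real m + 2 - real k) / (real m + 1) * real ((2 * m + 1 - k) choose m)"
    unfolding of_nat_Suc casts(2) by (simp add: field_simps)
qed

text \<open>One step of the Zeilberger-style certificate for \<open>binsum\<close>: with
  \<open>h k = q k 2\<^sup>k C(2m + 1 - k, m)\<close>, the term-wise telescoping identity is, after
  dividing by \<open>2\<^sup>k C(2m - k, m)\<close> and clearing denominators, the polynomial
  identity \<open>poly_cert\<close> in \<open>k\<close> and \<open>m\<close>.\<close>
lemma binsum_term_telescopes: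
  assumes k: "k \<le> m"
    and poly_cert: "\<alpha> * p k * (2 * real m + 2 - real k) * (2 * real m + 1 - real k)
      - \<beta> * p k * (real m + 1) * (real m + 1 - real k)
      = (real m + 1) * (q k * (2 * real m + 1 - real k) - 2 * q (Suc k) * (real m + 1 - real k))"
  shows "\<alpha> * (p k * 2 ^ k * real ((2 * Suc m - k) choose Suc m)) - \<beta> * (p k * 2 ^ k * real ((2 * m - k) choose m))
    = q k * 2 ^ k * real ((2 * m + 1 - k) choose m) - q (Suc k) * 2 ^ Suc k * real ((2 * m + 1 - Suc k) choose m)"
proof -
  define B where "B = real ((2 * m - k) choose m)"
  define D where "D = (real m + 1) * (real m + 1 - real k)"
  define R where "R = (2 * real m + 2 - real k) * (2 * real m + 1 - real k) / D"
  have pos: "real m + 1 - real k \<noteq> 0" "real m + 1 \<noteq> 0" using k by simp_all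
  then have "D \<noteq> 0" by (simp add: D_def)
  have grow: "real ((2 * Suc m - k) choose Suc m) = R * B"
    unfolding choose_shifts(2)[OF k] choose_shifts(1)[OF k] R_def B_def D_def using pos by simp
  have RD: "R * D = (2 * real m + 2 - real k) * (2 * real m + 1 - real k)"
    unfolding R_def using \<open>D \<noteq> 0\<close> by simp
  have "(\<alpha> * p k * R - \<beta> * p k) * D = \<alpha> * p k * (R * D) - \<beta> * p k * D"
    by (simp add: algebra_simps)
  also have "\<dots> = \<alpha> * p k * (2 * real m + 2 - real k) * (2 * real m + 1 - real k)
      - \<beta> * p k * (real m + 1) * (real m + 1 - real k)"
    unfolding RD by (simp add: D_def algebra_simps)
  also have "\<dots> = (q k * (2 * real m + 1 - real k) / (real m + 1 - real k) - 2 * q (Suc k)) * D"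
    unfolding poly_cert D_def using pos by (simp add: field_simps)
  finally have rational: "\<alpha> * p k * R - \<beta> * p k = q k * (2 * real m + 1 - real k) / (real m + 1 - real k) - 2 * q (Suc k)"
    using \<open>D \<noteq> 0\<close> by simp
  have "2 * m + 1 - Suc k = 2 * m - k" by simp
  then have "q k * 2 ^ k * real ((2 * m + 1 - k) choose m) - q (Suc k) * 2 ^ Suc k * real ((2 * m + 1 - Suc k) choose m)
      = 2 ^ k * B * (q k * (2 * real m + 1 - real k) / (real m + 1 - real k) - 2 * q (Suc k))"
    unfolding choose_shifts(1)[OF k] B_def by (simp add: algebra_simps)
  then show ?thesis unfolding rational[symmetric] grow B_def[symmetric] by (simp add: algebra_simps)
qed

text \<open>The resulting first-order recurrence \<open>\<alpha> S(m + 1) = \<beta> S(m)\<close> for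
  \<open>S = binsum p\<close>; \<open>top\<close> is the certificate identity for the extra last term.\<close>
lemma binsum_recurrence:
  assumes m: "m \<ge> 1" and q0: "q 0 = 0" and top: "\<alpha> * p (Suc m) = q (Suc m)"
    and poly_cert: "\<And>k. k \<le> m \<Longrightarrow>
      \<alpha> * p k * (2 * real m + 2 - real k) * (2 * real m + 1 - real k) - \<beta> * p k * (real m + 1) * (real m + 1 - real k)
      = (real m + 1) * (q k * (2 * real m + 1 - real k) - 2 * q (Suc k) * (real m + 1 - real k))"
  shows "\<alpha> * binsum p (Suc m) = \<beta> * binsum p m"
proof -
  define h where "h k = q k * 2 ^ k * real ((2 * m + 1 - k) choose m)" for k
  have "\<alpha> * (\<Sum>k<Suc (Suc m). p k * 2 ^ k * real ((2 * Suc m - k) choose Suc m))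
      = \<beta> * (\<Sum>k<Suc m. p k * 2 ^ k * real ((2 * m - k) choose m))"
  proof (rule telescoping_recurrence[where h = h])
    show "\<alpha> * (p k * 2 ^ k * real ((2 * Suc m - k) choose Suc m)) - \<beta> * (p k * 2 ^ k * real ((2 * m - k) choose m))
      = h k - h (Suc k)" if k: "k \<le> Suc m" for k
    proof (cases "k \<le> m")
      case True
      show ?thesis unfolding h_def by (rule binsum_term_telescopes[where p = p and q = q, OF True poly_cert[OF True]])
    next
      case False
      then have "k = Suc m" using k by simp
      moreover have "2 * m - Suc m = m - 1" "2 * m + 1 - Suc (Suc m) = m - 1" "2 * Suc m - Suc m = Suc m"
        "2 * m + 1 - Suc m = m" by auto
      ultimately show ?thesis using m top unfolding h_def by (simp add: binomial_eq_0)
    qed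
    show "h 0 = 0" by (simp add: h_def q0)
    show "h (Suc (Suc m)) = 0" using m by (simp add: h_def)
    show "p (Suc m) * 2 ^ Suc m * real ((2 * m - Suc m) choose m) = 0" using m by simp
  qed
  then show ?thesis by (simp add: binsum_def)
qed

lemma central_binomial_step:
  "real (m + 1) * real ((2 * Suc m) choose Suc m) = 2 * (2 * real m + 1) * real ((2 * m) choose m)"
proof -
  define X where "X = real ((2 * Suc m) choose Suc m)"
  define Y where "Y = real ((2 * m + 1) choose m)"
  define Z where "Z = real ((2 * m) choose m)"
  have "2 * Suc m = Suc (2 * m + 1)" by simp
  then have "Suc m * ((2 * Suc m) choose Suc m) = Suc (2 * m + 1) * ((2 * m + 1) choose m)"
    by (simp only: Suc_times_binomial)
  then have "real (Suc m) * X = real (Suc (2 * m + 1)) * Y"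
    unfolding X_def Y_def by (simp only: of_nat_mult[symmetric])
  then have up: "real (m + 1) * X = 2 * (real (m + 1) * Y)" by (simp add: algebra_simps)
  have "(2 * m + 1 - m) * ((2 * m + 1) choose m) = (2 * m + 1) * ((2 * m + 1 - 1) choose m)"
    by (rule binomial_absorb_comp)
  moreover have "2 * m + 1 - m = m + 1" "2 * m + 1 - 1 = 2 * m" by simp_all
  ultimately have "(m + 1) * ((2 * m + 1) choose m) = (2 * m + 1) * ((2 * m) choose m)"
    by (simp only:)
  then have "real (m + 1) * Y = real (2 * m + 1) * Z"
    unfolding Y_def Z_def by (simp only: of_nat_mult[symmetric])
  then show ?thesis using up by (simp add: X_def Z_def)
qed

lemma binsum_linear: "binsum (\<lambda>k. real k + 1) m = (2 * real m + 1) * real ((2 * m) choose m)"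
proof (induction m)
  case (Suc m)
  show ?case
  proof (cases "m = 0")
    case True
    then show ?thesis by (simp add: binsum_def numeral_2_eq_2)
  next
    case False
    have "real (m + 1) * binsum (\<lambda>k. real k + 1) (Suc m) = 2 * (2 * real m + 3) * binsum (\<lambda>k. real k + 1) m"
      by (rule binsum_recurrence[where q = "\<lambda>k. real k * (real k + 1)"]) (use False in \<open>auto simp: algebra_simps\<close>)
    also have "\<dots> = (2 * real m + 3) * (real (m + 1) * real ((2 * Suc m) choose Suc m))"
      unfolding Suc.IH central_binomial_step by (simp add: algebra_simps)
    also have "\<dots> = real (m + 1) * ((2 * real (Suc m) + 1) * real ((2 * Suc m) choose Suc m))"
      by (simp add: algebra_simps)
    finally show ?thesis by simp
  qed
qed (simp add: binsum_def)

lemma binsum_quadratic: "binsum (\<lambda>k. (real k + 1) * (real k + 2)) m = 2 * (real m + 1) * 4 ^ m"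
proof (induction m)
  case (Suc m)
  show ?case
  proof (cases "m = 0")
    case True
    then show ?thesis by (simp add: binsum_def numeral_2_eq_2)
  next
    case False
    have "real (m + 1) * binsum (\<lambda>k. (real k + 1) * (real k + 2)) (Suc m)
        = 4 * (real m + 2) * binsum (\<lambda>k. (real k + 1) * (real k + 2)) m"
      by (rule binsum_recurrence[where q = "\<lambda>k. real k * (real k + 1) * (real k + 2)"])
        (use False in \<open>auto simp: algebra_simps\<close>)
    also have "\<dots> = real (m + 1) * (2 * (real (Suc m) + 1) * 4 ^ Suc m)"
      unfolding Suc.IH by (simp add: algebra_simps)
    finally show ?thesis by simp
  qed
qed (simp add: binsum_def)

lemma pochhammer_two: "pochhammer (2::real) k = fact (Suc k)"
proof -
  have "fact (Suc k) = (pochhammer 1 (Suc k) :: real)" by (rule pochhammer_fact)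
  also have "\<dots> = pochhammer 2 k" by (simp add: pochhammer_rec)
  finally show ?thesis by simp
qed

lemma pochhammer_minus_nat: "pochhammer (- real m) k = (-1) ^ k * real (m choose k) * fact k"
proof -
  have "real (m choose k) = pochhammer (real m - of_nat k + 1) k / fact k"
    unfolding binomial_gbinomial by (rule gbinomial_pochhammer')
  then show ?thesis by (simp add: pochhammer_minus)
qed

text \<open>\<open>C(m, k) C(2m, m) = C(2m, k) C(2m - k, m)\<close>, used to move the \<open>k\<close>-dependence
  of the \<open>\<^sub>3F\<^sub>2\<close> terms into \<open>C(2m - k, m)\<close>.\<close>
lemma choose_mult_central:
  assumes "k \<le> m"
  shows "real (m choose k) * real ((2 * m) choose m) = real ((2 * m) choose k) * real ((2 * m - k) choose m)"
proof -
  have "((2 * m) choose m) * (m choose k) = ((2 * m) choose k) * ((2 * m - k) choose (m - k))"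
    using choose_mult[of k m "2 * m"] assms by simp
  moreover have "(2 * m - k) choose (m - k) = (2 * m - k) choose m"
    using binomial_symmetric[of "m - k" "2 * m - k"] assms by simp
  ultimately show ?thesis by (metis mult.commute of_nat_mult)
qed

lemma hyp3F2_term:
  assumes "k \<le> m"
  shows "pochhammer 2 k * pochhammer 2 k * pochhammer (- real m) k
      / (pochhammer 1 k * pochhammer (- real (2 * m)) k) * 2 ^ k / fact k
    = (real k + 1) ^ 2 * 2 ^ k * real ((2 * m - k) choose m) / real ((2 * m) choose m)"
proof -
  define a where "a = real (m choose k)"
  define b where "b = real ((2 * m) choose k)"
  define F where "F = (fact k :: real)"
  have nz: "b \<noteq> 0" "real ((2 * m) choose m) \<noteq> 0" "F \<noteq> 0" using assms by (simp_all add: b_def F_def)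
  have fact_Suc: "(fact (Suc k) :: real) = (real k + 1) * F" by (simp add: F_def)
  have "pochhammer 2 k * pochhammer 2 k * pochhammer (- real m) k
      / (pochhammer 1 k * pochhammer (- real (2 * m)) k) * 2 ^ k / fact k
    = ((real k + 1) * F) * ((real k + 1) * F) * ((-1) ^ k * a * F) / (F * ((-1) ^ k * b * F)) * 2 ^ k / F"
    unfolding pochhammer_minus_nat pochhammer_two fact_Suc by (simp add: a_def b_def F_def pochhammer_fact)
  also have "\<dots> = (real k + 1) ^ 2 * 2 ^ k * (a / b)" using nz by (simp add: field_simps power2_eq_square)
  also have "a / b = real ((2 * m - k) choose m) / real ((2 * m) choose m)"
    using choose_mult_central[OF assms] nz unfolding a_def b_def by (simp add: field_simps)
  finally show ?thesis by simp
qed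

lemma hyp3F2_binsum: "hyp3F2 (m + 2) = binsum (\<lambda>k. (real k + 1) ^ 2) m / real ((2 * m) choose m)"
proof -
  have "2 - real (m + 2) = - real m" "4 - 2 * real (m + 2) = - real (2 * m)" by simp_all
  then have "hyp3F2 (m + 2) = (\<Sum>k<Suc m. pochhammer 2 k * pochhammer 2 k * pochhammer (- real m) k
      / (pochhammer 1 k * pochhammer (- real (2 * m)) k) * 2 ^ k / fact k)"
    unfolding hyp3F2_def by (simp add: atLeast0AtMost lessThan_Suc_atMost)
  also have "\<dots> = (\<Sum>k<Suc m. (real k + 1) ^ 2 * 2 ^ k * real ((2 * m - k) choose m) / real ((2 * m) choose m))"
    by (rule sum.cong[OF refl], rule hyp3F2_term) simp
  finally show ?thesis unfolding binsum_def sum_divide_distrib .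
qed

lemma dfact_even_fact: "real (dfact (2 * m)) = 2 ^ m * fact m"
proof (induction m)
  case (Suc m)
  have "2 * Suc m = Suc (Suc (2 * m))" by simp
  then show ?case using Suc by (simp add: algebra_simps)
qed simp

lemma dfact_odd_fact: "real (dfact (2 * m + 1)) * 2 ^ m * fact m = fact (2 * m + 1)"
proof (induction m)
  case (Suc m)
  have e: "2 * Suc m + 1 = Suc (Suc (2 * m + 1))" by simp
  have "real (dfact (2 * Suc m + 1)) * 2 ^ Suc m * fact (Suc m)
     = (2 * real m + 3) * (2 * real m + 2) * (real (dfact (2 * m + 1)) * 2 ^ m * fact m)"
    unfolding e by (simp add: algebra_simps)
  also have "\<dots> = fact (2 * Suc m + 1)" unfolding Suc e by (simp add: algebra_simps)
  finally show ?case .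
qed simp

lemma fact_double_central: "(fact (2 * m) :: real) = fact m * fact m * real ((2 * m) choose m)"
  using binomial_fact_lemma[of m "2 * m"]
  by (metis (mono_tags) mult_2 add_diff_cancel_left' le_add1 of_nat_fact of_nat_mult)

lemma dfact_ratio: "real (dfact (2 * m + 2)) / real (dfact (2 * m + 1))
   = 2 * (real m + 1) * 4 ^ m / ((2 * real m + 1) * real ((2 * m) choose m))"
proof -
  define F where "F = (fact m :: real)"
  define P where "P = (2::real) ^ m"
  define d where "d = real ((2 * m) choose m)"
  define Q where "Q = 2 * real m + 1"
  have nz: "F \<noteq> 0" "P \<noteq> 0" "d \<noteq> 0" "Q \<noteq> 0" by (simp_all add: F_def P_def d_def Q_def)
  have even: "real (dfact (2 * m + 2)) = 2 * P * (real m + 1) * F"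
    using dfact_even_fact[of "m + 1"] by (simp add: P_def F_def algebra_simps)
  have "(fact (2 * m) :: real) = F * F * d"
    unfolding F_def d_def by (rule fact_double_central)
  then have "(real (dfact (2 * m + 1)) * P) * F = (Q * F * d) * F"
    using dfact_odd_fact[of m] unfolding P_def F_def Q_def by (simp add: algebra_simps)
  then have "real (dfact (2 * m + 1)) * P = Q * F * d"
    using nz(1) by simp
  then have odd: "real (dfact (2 * m + 1)) = Q * F * d / P"
    using nz(2) by (simp add: eq_divide_eq)
  have "(4::real) ^ m = P * P" by (simp add: P_def flip: power_mult_distrib)
  then show ?thesis
    unfolding even odd d_def[symmetric] Q_def[symmetric] using nz by (simp add: field_simps)
qed

lemma hyp3F2_closed:
  assumes "n \<ge> 2"
  shows "hyp3F2 n = (2 * real n - 3) * (real (dfact (2 * n - 2)) / real (dfact (2 * n - 3)) - 1)"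
proof -
  obtain m where n: "n = m + 2" using assms le_Suc_ex by (metis add.commute)
  have idx: "2 * n - 2 = 2 * m + 2" "2 * n - 3 = 2 * m + 1" using n by auto
  define d where "d = real ((2 * m) choose m)"
  define Q where "Q = 2 * real m + 1"
  have nz: "d \<noteq> 0" "Q \<noteq> 0" by (simp_all add: d_def Q_def)
  have "binsum (\<lambda>k. (real k + 1) ^ 2) m
      = binsum (\<lambda>k. (real k + 1) * (real k + 2)) m - binsum (\<lambda>k. real k + 1) m"
    by (simp add: binsum_def power2_eq_square algebra_simps flip: sum_subtractf)
  then have "hyp3F2 n = (2 * (real m + 1) * 4 ^ m - Q * d) / d"
    unfolding n hyp3F2_binsum binsum_quadratic binsum_linear d_def Q_def by simp
  moreover have "2 * real n - 3 = Q" by (simp add: n Q_def)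
  moreover have "Q * (2 * (real m + 1) * 4 ^ m / (Q * d) - 1) = (2 * (real m + 1) * 4 ^ m - Q * d) / d"
    using nz by (simp add: field_simps)
  ultimately show ?thesis
    unfolding idx dfact_ratio d_def[symmetric] Q_def[symmetric] by simp
qed

lemma real_choose_two: "real (n choose 2) = real n * (real n - 1) / 2"
proof (induction n)
  case (Suc n)
  have "Suc n choose 2 = n + (n choose 2)" by (simp add: numeral_2_eq_2)
  then show ?case using Suc by (simp add: field_simps)
qed simp

lemma E_U_Phi_hypergeometric:
  assumes n: "n \<ge> 3"
  shows "E_U_Phi n = real (n choose 2) * (1 / real (2 * n - 3) * hyp3F2 n
      - 1 / 2 * real (dfact (2 * n - 2)) / real (dfact (2 * n - 3)))"
proof -
  define D where "D = real (dfact (2 * n - 2))"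
  define C where "C = real (dfact (2 * n - 3))"
  define T where "T = 2 * real n - 3"
  have nz: "C \<noteq> 0" "T \<noteq> 0" using dfact_pos[of "2 * n - 3"] n by (simp_all add: C_def T_def)
  have T: "real (2 * n - 3) = T" using n by (simp add: T_def of_nat_diff)
  have hyp: "hyp3F2 n = T * (D / C - 1)" using hyp3F2_closed n by (simp add: T_def D_def C_def)
  have E: "E_U_Phi n = real n * (real n - 1) / 2 * (D / (2 * C) - 1)"
    using E_U_Phi_closed n by (simp add: D_def C_def)
  show ?thesis
    unfolding real_choose_two D_def[symmetric] C_def[symmetric] T hyp E using nz by (simp add: field_simps)
qed

text \<open>The classical asymptotics \<open>C(2m, m) \<sim> 4\<^sup>m / \<surd>(\<pi> m)\<close>, derived from the
  general asymptotics of \<open>(-1/2) gchoose m\<close>.\<close>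
lemma central_binomial_asymptotics:
  "(\<lambda>m. real ((2 * m) choose m) * sqrt (real m) / 4 ^ m) \<longlonglongrightarrow> 1 / sqrt pi"
proof -
  have lim: "(\<lambda>m. ((-1/2::real) gchoose m) / ((-1) ^ m / exp ((-1/2 + 1) * of_real (ln (real m)))))
      \<longlonglongrightarrow> inverse (Gamma (- (-1/2::real)))"
    by (rule gbinomial_asymptotic)
  have "inverse (Gamma (- (-1/2::real))) = 1 / sqrt pi"
    by (simp add: Gamma_one_half_real inverse_eq_divide)
  moreover have "\<forall>\<^sub>F m in sequentially.
      ((-1/2::real) gchoose m) / ((-1) ^ m / exp ((-1/2 + 1) * of_real (ln (real m))))
      = real ((2 * m) choose m) * sqrt (real m) / 4 ^ m"
    using eventually_gt_at_top[of "0::nat"]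
  proof eventually_elim
    fix m :: nat assume m: "m > 0"
    have S: "exp ((-1/2 + 1) * of_real (ln (real m))) = sqrt (real m)"
      using m by (simp add: ln_sqrt[symmetric])
    have G: "((-1/2::real) gchoose m) = (-1) ^ m * pochhammer (1/2) m / fact m"
      by (subst gbinomial_pochhammer) simp
    have "(2::real) ^ (2 * m) = 4 ^ m" by (simp add: power_mult)
    moreover have "(fact (2 * m) :: real) = 2 ^ (2 * m) * pochhammer (1/2) m * fact m"
      by (rule fact_double)
    ultimately have "(fact (2 * m) :: real) = 4 ^ m * pochhammer (1/2) m * fact m"
      by simp
    then have "fact m * (fact m * real ((2 * m) choose m)) = fact m * (4 ^ m * pochhammer (1/2) m :: real)"
      using fact_double_central[of m] by (simp add: algebra_simps)
    then have "fact m * real ((2 * m) choose m) = (4 ^ m * pochhammer (1/2) m :: real)"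
      by simp
    then have C: "real ((2 * m) choose m) = 4 ^ m * pochhammer (1/2) m / fact m"
      by (simp add: eq_divide_eq mult.commute)
    show "((-1/2::real) gchoose m) / ((-1) ^ m / exp ((-1/2 + 1) * of_real (ln (real m))))
      = real ((2 * m) choose m) * sqrt (real m) / 4 ^ m"
      unfolding S G C using m by (simp add: field_simps)
  qed
  ultimately show ?thesis using Lim_transform_eventually[OF lim] by simp
qed

lemma E_U_Phi_central: "E_U_Phi (m + 2) = (real m + 2) * (real m + 1) / 2
    * ((real m + 1) * 4 ^ m / ((2 * real m + 1) * real ((2 * m) choose m)) - 1)"
proof -
  have idx: "2 * (m + 2) - 2 = 2 * m + 2" "2 * (m + 2) - 3 = 2 * m + 1" by auto
  define X where "X = real (dfact (2 * m + 2))"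
  define Y where "Y = real (dfact (2 * m + 1))"
  have "E_U_Phi (m + 2) = (real m + 2) * (real m + 1) / 2 * (X / Y / 2 - 1)"
    using E_U_Phi_closed[of "m + 2"] unfolding idx X_def[symmetric] Y_def[symmetric]
    by (simp add: algebra_simps)
  also have "X / Y = 2 * ((real m + 1) * 4 ^ m) / ((2 * real m + 1) * real ((2 * m) choose m))"
    unfolding X_def Y_def dfact_ratio by (simp only: mult.assoc)
  also have "\<dots> / 2 = (real m + 1) * 4 ^ m / ((2 * real m + 1) * real ((2 * m) choose m))"
    by simp
  finally show ?thesis .
qed

text \<open>With
  \<open>w m = C(2m, m) \<surd>m / 4\<^sup>m \<rightarrow> 1/\<surd>\<pi>\<close>, the ratio \<open>E\<^sub>U(\<Phi>\<^sub>m\<^sub>+\<^sub>2) / ((\<surd>\<pi>/4) (m + 2)\<^sup>5\<^sup>/\<^sup>2)\<close>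
  equals \<open>a m / (c w m) - b m / c\<close> for explicit \<open>a \<rightarrow> 1/4\<close> and \<open>b \<rightarrow> 0\<close>.\<close>
lemma E_U_Phi_asymptotics: "E_U_Phi \<sim>[at_top] (\<lambda>n. sqrt pi / 4 * real n powr (5 / 2))"
proof (rule asymp_equivI')
  define c where "c = sqrt pi / 4"
  define w where "w m = real ((2 * m) choose m) * sqrt (real m) / 4 ^ m" for m
  define a where "a m = (real m + 2) * (real m + 1) * (real m + 1) * sqrt (real m)
      / (2 * (2 * real m + 1) * (real m + 2) powr (5 / 2))" for m
  define b where "b m = (real m + 2) * (real m + 1) / (2 * (real m + 2) powr (5 / 2))" for m
  have nz: "c \<noteq> 0" "1 / sqrt pi \<noteq> 0" by (simp_all add: c_def)
  have "a \<longlonglongrightarrow> 1 / 4" unfolding a_def by real_asymp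
  moreover have "b \<longlonglongrightarrow> 0" unfolding b_def by real_asymp
  moreover have "w \<longlonglongrightarrow> 1 / sqrt pi" unfolding w_def by (rule central_binomial_asymptotics)
  ultimately have "(\<lambda>m. a m / c * inverse (w m) - b m / c) \<longlonglongrightarrow> 1 / 4 / c * inverse (1 / sqrt pi) - 0 / c"
    by (intro tendsto_intros nz)
  moreover have "1 / 4 / c * inverse (1 / sqrt pi) - 0 / c = 1" by (simp add: c_def)
  moreover have "\<forall>\<^sub>F m in sequentially. a m / c * inverse (w m) - b m / c
      = E_U_Phi (m + 2) / (sqrt pi / 4 * real (m + 2) powr (5 / 2))"
    using eventually_gt_at_top[of "0::nat"]
  proof eventually_elim
    fix m :: nat assume m: "m > 0"
    define M where "M = real m"
    define S where "S = sqrt M"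
    define d where "d = real ((2 * m) choose m)"
    define F4 where "F4 = (4::real) ^ m"
    define Pw where "Pw = (M + 2) powr (5 / 2)"
    define Q where "Q = 2 * M + 1"
    have ne: "S \<noteq> 0" "d \<noteq> 0" "F4 \<noteq> 0" "Pw \<noteq> 0" "Q \<noteq> 0" "M + 1 \<noteq> 0" "M + 2 \<noteq> 0"
      using m by (simp_all add: S_def M_def d_def F4_def Pw_def Q_def)
    have E: "E_U_Phi (m + 2) = (M + 2) * (M + 1) / 2 * ((M + 1) * F4 / (Q * d) - 1)"
      unfolding E_U_Phi_central M_def F4_def Q_def d_def ..
    have scale: "sqrt pi / 4 * real (m + 2) powr (5 / 2) = c * Pw"
      by (simp add: c_def Pw_def M_def add.commute)
    have wab: "w m = d * S / F4" "a m = (M + 2) * (M + 1) * (M + 1) * S / (2 * Q * Pw)"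
      "b m = (M + 2) * (M + 1) / (2 * Pw)"
      by (simp_all add: w_def a_def b_def M_def S_def d_def F4_def Pw_def Q_def)
    show "a m / c * inverse (w m) - b m / c = E_U_Phi (m + 2) / (sqrt pi / 4 * real (m + 2) powr (5 / 2))"
      unfolding E scale wab using ne \<open>c \<noteq> 0\<close> by (simp add: field_simps)
  qed
  ultimately have "(\<lambda>m. E_U_Phi (m + 2) / (sqrt pi / 4 * real (m + 2) powr (5 / 2))) \<longlonglongrightarrow> 1"
    using Lim_transform_eventually by fastforce
  then show "(\<lambda>n. E_U_Phi n / (sqrt pi / 4 * real n powr (5 / 2))) \<longlonglongrightarrow> 1"
    by (rule LIMSEQ_offset)
qed

theorem mainTheorem19:
  shows "(\<forall>n\<ge>3. E_U_Phi n =
            real (n choose 2) *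
              (1 / real (2 * n - 3) * hyp3F2 n
               - 1 / 2 * real (dfact (2 * n - 2)) / real (dfact (2 * n - 3))))
         \<and> (E_U_Phi \<sim>[at_top] (\<lambda>n. sqrt pi / 4 * real n powr (5 / 2)))"
  using E_U_Phi_hypergeometric E_U_Phi_asymptotics by blast

end
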